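(* For every integer $k>1$ and every integer $1\le\Delta\le k$, there exists a finite instance $\mathbf{X}\subset\mathbb{R}^d$ such that, with probability at least $1-e^{-\sqrt{k}/2}$, the set $C_{k+\Delta}$ of the first $k+\Delta$ centers chosen by $k$-means++ seeding satisfies $$\mathrm{cost}(\mathbf{X},C_{k+\Delta})>\frac18\ln\frac{k}{\Delta}\cdot\mathrm{OPT}_k(\mathbf{X}).$$
   Context: $\mathrm{cost}(x,C)=\min_{c\in C}\|x-c\|^2$, $\mathrm{cost}(\mathbf{Y},C)=\sum_{x\in\mathbf{Y}}\mathrm{cost}(x,C)$, $\mathrm{OPT}_k(\mathbf{X})=\min_{|C|=k}\mathrm{cost}(\mathbf{X},C)$. $k$-means++ seeding: $c_1$ uniform from $\mathbf{X}$, $C_1=\{c_1\}$; $C_{t+1}=C_t\cup\{x\}$ with $x$ chosen with probability $\mathrm{cost}(x,C_t)/\mathrm{cost}(\mathbf{X},C_t)$. *)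

theory Defs
  imports "HOL-Probability.Probability"
begin

text \<open>Points of R^d are represented as functions nat => real vanishing outside {..<d}.\<close>

definition Rd :: "nat \<Rightarrow> (nat \<Rightarrow> real) set" where
  "Rd d = {x. \<forall>i\<ge>d. x i = 0}"

definition sqdist :: "nat \<Rightarrow> (nat \<Rightarrow> real) \<Rightarrow> (nat \<Rightarrow> real) \<Rightarrow> real" where
  "sqdist d x c = (\<Sum>i<d. (x i - c i)^2)"

definition cost :: "nat \<Rightarrow> (nat \<Rightarrow> real) \<Rightarrow> (nat \<Rightarrow> real) set \<Rightarrow> real" where
  "cost d x C = Min ((\<lambda>c. sqdist d x c) ` C)"

definition cost_set :: "nat \<Rightarrow> (nat \<Rightarrow> real) set \<Rightarrow> (nat \<Rightarrow> real) set \<Rightarrow> real" where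
  "cost_set d Y C = (\<Sum>x\<in>Y. cost d x C)"

definition OPT :: "nat \<Rightarrow> nat \<Rightarrow> (nat \<Rightarrow> real) set \<Rightarrow> real" where
  "OPT d k X = Inf {cost_set d X C | C. C \<subseteq> Rd d \<and> finite C \<and> card C = k}"

text \<open>One step of k-means++ seeding: the first center is uniform on X; afterwards a point
  x is chosen with probability cost(x,C)/cost(X,C). (If cost(X,C) = 0, which cannot change the
  cost afterwards, we fall back to the uniform choice.)\<close>
definition kpp_step :: "nat \<Rightarrow> (nat \<Rightarrow> real) set \<Rightarrow> (nat \<Rightarrow> real) set \<Rightarrow> (nat \<Rightarrow> real) pmf" where
  "kpp_step d X C =
     (if C = {} \<or> cost_set d X C = 0 then pmf_of_set X
      else embed_pmf (\<lambda>x. if x \<in> X then cost d x C / cost_set d X C else 0))"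

fun kpp :: "nat \<Rightarrow> (nat \<Rightarrow> real) set \<Rightarrow> nat \<Rightarrow> (nat \<Rightarrow> real) set pmf" where
  "kpp d X 0 = return_pmf {}"
| "kpp d X (Suc t) = bind_pmf (kpp d X t) (\<lambda>C. map_pmf (\<lambda>x. insert x C) (kpp_step d X C))"

end

theory Submission
  imports Defs
begin

text \<open>Take k clusters of n = 128 k points each: inside a cluster all squared distances are 2,
  between clusters they are V = 2 + 2 a^2, and k suitable centers give cost at most k n.
  While at most 2 k centers are chosen and w clusters are still uncovered, the next k-means++
  center lands in an uncovered cluster with probability at most w V / (w V + k - w). Hence the
  potential prod_{v = w+1..k} (2 + (k - v) / (v V)) of the number w of uncovered clusters at most
  doubles in expectation per step, and by Markov's inequality more than
  b = sqrt(k \<Delta>) ln(k/\<Delta>) / 8 clusters remain uncovered after k + \<Delta> steps, except with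
  probability at most 2^(k + \<Delta>) divided by the potential of b. For V = sqrt(k/\<Delta>) this is at
  most exp(-sqrt k / 2), and b uncovered clusters already cost b n V > ln(k/\<Delta>) k n / 8.
  When ln(k/\<Delta>) \<le> 31/2 no randomness is needed: every point that is not a center costs at
  least 2.\<close>

lemma pmf_Markov_inequality:
  fixes f :: "'a \<Rightarrow> real"
  assumes "0 < \<theta>" "\<And>x. x \<in> A \<Longrightarrow> \<theta> \<le> f x" "(\<integral>\<^sup>+x. ennreal (f x) \<partial>measure_pmf M) \<le> ennreal B"
    "0 \<le> B"
  shows "measure_pmf.prob M A \<le> B / \<theta>"
proof -
  have "ennreal (\<theta> * measure_pmf.prob M A) = (\<integral>\<^sup>+x. ennreal \<theta> * indicator A x \<partial>measure_pmf M)"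
    using assms(1) by (subst nn_integral_cmult_indicator)
      (auto simp: ennreal_mult measure_pmf.emeasure_eq_measure)
  also have "\<dots> \<le> (\<integral>\<^sup>+x. ennreal (f x) \<partial>measure_pmf M)"
    using assms(2) by (intro nn_integral_mono) (auto intro: ennreal_leI split: split_indicator)
  also note assms(3)
  finally have "\<theta> * measure_pmf.prob M A \<le> B"
    using assms(4) by (simp add: ennreal_le_iff)
  then show ?thesis using assms(1) by (simp add: field_simps)
qed

lemma nn_integral_pmf_if:
  assumes "0 \<le> q" "q \<le> p"
  shows "(\<integral>\<^sup>+x. ennreal (if x \<in> A then p else q) \<partial>measure_pmf M)
    = ennreal (q + (p - q) * measure_pmf.prob M A)"
proof -
  have "(\<integral>\<^sup>+x. ennreal (if x \<in> A then p else q) \<partial>measure_pmf M)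
      = (\<integral>\<^sup>+x. ennreal q + ennreal (p - q) * indicator A x \<partial>measure_pmf M)"
    using assms by (intro nn_integral_cong) (auto simp flip: ennreal_plus)
  also have "\<dots> = ennreal q + ennreal (p - q) * emeasure (measure_pmf M) A"
    by (subst nn_integral_add) (auto simp: nn_integral_cmult_indicator measure_pmf.emeasure_space_1)
  also have "\<dots> = ennreal (q + (p - q) * measure_pmf.prob M A)"
    using assms by (simp add: measure_pmf.emeasure_eq_measure ennreal_mult ennreal_plus)
  finally show ?thesis .
qed

lemma sqdist_nonneg: "0 \<le> sqdist d x c"
  unfolding sqdist_def by (intro sum_nonneg) simp

lemma cost_le_sqdist: "finite C \<Longrightarrow> c \<in> C \<Longrightarrow> cost d x C \<le> sqdist d x c"
  unfolding cost_def by (intro Min_le) auto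

lemma cost_attained:
  assumes "finite C" "C \<noteq> {}"
  obtains c where "c \<in> C" "cost d x C = sqdist d x c"
proof -
  have "cost d x C \<in> (\<lambda>c. sqdist d x c) ` C"
    unfolding cost_def using assms by (intro Min_in) auto
  then show ?thesis using that by blast
qed

lemma cost_ge:
  assumes "finite C" "C \<noteq> {}" "\<And>c. c \<in> C \<Longrightarrow> r \<le> sqdist d x c"
  shows "r \<le> cost d x C"
  using cost_attained[OF assms(1,2)] assms(3) by metis

lemma cost_nonneg: "finite C \<Longrightarrow> C \<noteq> {} \<Longrightarrow> 0 \<le> cost d x C"
  by (intro cost_ge sqdist_nonneg)

lemma cost_set_nonneg: "finite C \<Longrightarrow> C \<noteq> {} \<Longrightarrow> 0 \<le> cost_set d Y C"
  unfolding cost_set_def by (intro sum_nonneg cost_nonneg)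

lemma OPT_le_cost_set:
  assumes "0 < k" "C \<subseteq> Rd d" "finite C" "card C = k"
  shows "OPT d k X \<le> cost_set d X C"
  unfolding OPT_def
proof (rule cInf_lower)
  show "cost_set d X C \<in> {cost_set d X C |C. C \<subseteq> Rd d \<and> finite C \<and> card C = k}"
    using assms by auto
  show "bdd_below {cost_set d X C |C. C \<subseteq> Rd d \<and> finite C \<and> card C = k}"
    using \<open>0 < k\<close> by (intro bdd_belowI[of _ 0]) (auto intro: cost_set_nonneg)
qed

lemma pmf_kpp_step:
  assumes "finite X" "finite C" "C \<noteq> {}" "cost_set d X C \<noteq> 0"
  shows "pmf (kpp_step d X C) x = (if x \<in> X then cost d x C / cost_set d X C else 0)"
proof -
  let ?f = "\<lambda>x. if x \<in> X then cost d x C / cost_set d X C else 0"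
  have nonneg: "0 \<le> ?f x" for x
    using assms by (simp add: cost_nonneg cost_set_nonneg)
  have "(\<integral>\<^sup>+x. ennreal (?f x) \<partial>count_space UNIV) = ennreal (\<Sum>x\<in>X. ?f x)"
    using assms(1) nonneg by (subst nn_integral_count_space') auto
  also have "(\<Sum>x\<in>X. ?f x) = 1"
    using assms(4) by (simp add: sum_divide_distrib[symmetric] cost_set_def)
  finally show ?thesis
    using assms nonneg by (simp add: kpp_step_def pmf_embed_pmf)
qed

lemma prob_kpp_step:
  assumes "finite X" "finite C" "C \<noteq> {}" "cost_set d X C \<noteq> 0" "A \<subseteq> X"
  shows "measure_pmf.prob (kpp_step d X C) A = (\<Sum>x\<in>A. cost d x C) / cost_set d X C"
  using assms finite_subset[OF assms(5,1)]
  by (auto simp: measure_measure_pmf_finite pmf_kpp_step sum_divide_distrib intro!: sum.cong)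

lemma set_pmf_kpp_step:
  assumes "finite X" "X \<noteq> {}" "finite C"
  shows "set_pmf (kpp_step d X C) \<subseteq> X"
proof (cases "C = {} \<or> cost_set d X C = 0")
  case True
  then show ?thesis using assms by (simp add: kpp_step_def)
next
  case False
  then have "pmf (kpp_step d X C) x = 0" if "x \<notin> X" for x
    using assms that by (simp add: pmf_kpp_step)
  then show ?thesis by (auto simp: set_pmf_iff) blast
qed

lemma set_pmf_kpp:
  assumes "finite X" "X \<noteq> {}" "C \<in> set_pmf (kpp d X t)"
  shows "C \<subseteq> X \<and> card C \<le> t \<and> (0 < t \<longrightarrow> C \<noteq> {})"
  using assms(3)
proof (induction t arbitrary: C)
  case (Suc t)
  then obtain C' x where C': "C' \<in> set_pmf (kpp d X t)" "x \<in> set_pmf (kpp_step d X C')"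
    and C: "C = insert x C'" by auto
  with Suc.IH have "C' \<subseteq> X" "card C' \<le> t" by auto
  moreover have "finite C'" using \<open>C' \<subseteq> X\<close> assms(1) finite_subset by blast
  ultimately show ?case
    using set_pmf_kpp_step[OF assms(1,2)] C' C by (auto simp: card_insert_if)
qed simp

lemma nn_integral_kpp_le_pow:
  assumes "\<And>t C. t < N \<Longrightarrow> C \<in> set_pmf (kpp d X t) \<Longrightarrow>
    (\<integral>\<^sup>+x. \<Phi> (insert x C) \<partial>kpp_step d X C) \<le> c * \<Phi> C"
  shows "(\<integral>\<^sup>+C. \<Phi> C \<partial>kpp d X N) \<le> c ^ N * \<Phi> {}"
  using assms
proof (induction N)
  case (Suc N)
  have "(\<integral>\<^sup>+C. \<Phi> C \<partial>kpp d X (Suc N)) = (\<integral>\<^sup>+C. \<integral>\<^sup>+x. \<Phi> (insert x C) \<partial>kpp_step d X C \<partial>kpp d X N)"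
    by simp
  also have "\<dots> \<le> (\<integral>\<^sup>+C. c * \<Phi> C \<partial>kpp d X N)"
    by (intro nn_integral_mono_AE) (auto simp: AE_measure_pmf_iff intro: Suc.prems)
  also have "\<dots> = c * (\<integral>\<^sup>+C. \<Phi> C \<partial>kpp d X N)"
    by (rule nn_integral_cmult) simp
  also have "\<dots> \<le> c * (c ^ N * \<Phi> {})"
    using Suc by (intro mult_left_mono) (auto intro: less_SucI)
  finally show ?case by (simp add: mult.assoc)
qed simp

section \<open>The potential of the number of uncovered clusters\<close>

text \<open>The factor for v is chosen so that its excess over 1, (v V + k - v) / (v V), is the
  reciprocal of the bound on the probability that a new center hits one of v uncovered clusters.\<close>

definition cover_potential :: "nat \<Rightarrow> real \<Rightarrow> nat \<Rightarrow> real" where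
  "cover_potential k V w = (\<Prod>v\<in>{w<..k}. 2 + (real k - real v) / (real v * V))"

lemma cover_potential_factor_ge_one: "0 < V \<Longrightarrow> v \<le> k \<Longrightarrow> 1 \<le> 2 + (real k - real v) / (real v * V)"
  by (auto intro!: add_increasing2 divide_nonneg_nonneg)

lemma cover_potential_ge_one: "0 < V \<Longrightarrow> 1 \<le> cover_potential k V w"
  unfolding cover_potential_def by (intro prod_ge_1 cover_potential_factor_ge_one) auto

lemma cover_potential_top [simp]: "cover_potential k V k = 1"
  by (simp add: cover_potential_def)

lemma cover_potential_pred:
  "1 \<le> w \<Longrightarrow> w \<le> k \<Longrightarrow>
    cover_potential k V (w - 1) = (2 + (real k - real w) / (real w * V)) * cover_potential k V w"
proof -
  assume "1 \<le> w" "w \<le> k"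
  then have "{w - 1<..k} = insert w {w<..k}" by auto
  then show ?thesis unfolding cover_potential_def by simp
qed

lemma cover_potential_antimono:
  assumes "0 < V" "w \<le> w'"
  shows "cover_potential k V w' \<le> cover_potential k V w"
proof -
  have "cover_potential k V w = (\<Prod>v\<in>{w<..k} - {w'<..k}. 2 + (real k - real v) / (real v * V)) *
      cover_potential k V w'"
    unfolding cover_potential_def using assms(2) by (intro prod.subset_diff) auto
  moreover have "1 \<le> (\<Prod>v\<in>{w<..k} - {w'<..k}. 2 + (real k - real v) / (real v * V))"
    using assms(1) by (intro prod_ge_1 cover_potential_factor_ge_one) auto
  ultimately show ?thesis
    using cover_potential_ge_one[OF assms(1), of k w'] by (simp add: mult_le_cancel_right1)
qed

lemma ln_div_le_sum_inverse: "b \<le> k \<Longrightarrow> ln ((real k + 1) / (real b + 1)) \<le> (\<Sum>v\<in>{b<..k}. 1 / real v)"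
proof (induction k)
  case (Suc k)
  show ?case
  proof (cases "b = Suc k")
    case False
    then have "b \<le> k" using Suc.prems by simp
    then have set: "{b<..Suc k} = insert (Suc k) {b<..k}" by auto
    have "ln ((real (Suc k) + 1) / (real b + 1))
        = ln ((real k + 1) / (real b + 1)) + ln ((real k + 2) / (real k + 1))"
      by (simp add: ln_div)
    also have "ln ((real k + 2) / (real k + 1)) \<le> (real k + 2) / (real k + 1) - 1"
      by (rule ln_le_minus_one) simp
    also have "(real k + 2) / (real k + 1) - 1 = 1 / real (Suc k)"
      by (simp add: field_simps)
    finally show ?thesis using Suc.IH[OF \<open>b \<le> k\<close>] set by simp
  qed simp
qed simp

lemma div_one_plus_le_ln: "0 \<le> (y::real) \<Longrightarrow> y / (1 + y) \<le> ln (1 + y)"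
  using ln_le_minus_one[of "1 / (1 + y)"] by (simp add: ln_div field_simps)

lemma ln_two_le: "ln (2::real) \<le> 3/4"
proof -
  have "2 \<le> exp (3/4::real)"
    using exp_lower_Taylor_quadratic[of "3/4::real"] by (simp add: power2_eq_square)
  then have "ln 2 \<le> ln (exp (3/4::real))" by (subst ln_le_cancel_iff) auto
  then show ?thesis by simp
qed

lemma ln_cover_potential_ge:
  assumes "0 < V" "b \<le> k" "31 * real k \<le> 16 * (real b + 1) * V"
  shows "real (k - b) * ln 2 + 31/39 * (real k / (2 * V) * (\<Sum>v\<in>{b<..k}. 1 / real v)
      - real (k - b) / (2 * V)) \<le> ln (cover_potential k V b)"
proof -
  define y where "y v = (real k - real v) / (2 * real v * V)" for v :: nat
  have y_nonneg: "0 \<le> y v" and y_small: "y v \<le> 8/31" if "v \<in> {b<..k}" for v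
  proof -
    have "0 < real v" "real b + 1 \<le> real v" using that by auto
    then have "y v \<le> real k / (2 * (real b + 1) * V)"
      unfolding y_def using assms(1) by (intro frac_le) auto
    also have "\<dots> \<le> 8/31"
      by (subst pos_divide_le_eq) (use assms(1,3) in \<open>auto simp: algebra_simps add_pos_nonneg\<close>)
    finally show "y v \<le> 8/31" .
    show "0 \<le> y v" unfolding y_def using that assms(1) by auto
  qed
  have ln_factor: "ln 2 + 31/39 * y v \<le> ln (2 + (real k - real v) / (real v * V))"
    if "v \<in> {b<..k}" for v
  proof -
    have "31/39 * y v \<le> y v / (1 + y v)"
      using y_nonneg[OF that] y_small[OF that] by (simp add: field_simps mult_left_mono)
    also have "\<dots> \<le> ln (1 + y v)" by (rule div_one_plus_le_ln[OF y_nonneg[OF that]])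
    also have "ln 2 + ln (1 + y v) = ln (2 * (1 + y v))"
      using y_nonneg[OF that] by (subst ln_mult) auto
    also have "2 * (1 + y v) = 2 + (real k - real v) / (real v * V)"
      using that assms(1) unfolding y_def by (auto simp: field_simps)
    finally show ?thesis by simp
  qed
  have sum_y: "(\<Sum>v\<in>{b<..k}. y v) = real k / (2 * V) * (\<Sum>v\<in>{b<..k}. 1 / real v) - real (k - b) / (2 * V)"
  proof -
    have "y v = real k / (2 * V) * (1 / real v) - 1 / (2 * V)" if "v \<in> {b<..k}" for v
      using that assms(1) unfolding y_def by (auto simp: field_simps)
    then show ?thesis by (simp add: sum_subtractf sum_distrib_left)
  qed
  have pos: "0 < 2 + (real k - real v) / (real v * V)" if "v \<in> {b<..k}" for v
    using cover_potential_factor_ge_one[OF assms(1)] that by fastforce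
  have "real (k - b) * ln 2 + 31/39 * (\<Sum>v\<in>{b<..k}. y v) = (\<Sum>v\<in>{b<..k}. ln 2 + 31/39 * y v)"
    by (simp add: sum.distrib sum_distrib_left)
  also have "\<dots> \<le> (\<Sum>v\<in>{b<..k}. ln (2 + (real k - real v) / (real v * V)))"
    by (intro sum_mono ln_factor)
  also have "\<dots> = ln (cover_potential k V b)"
    unfolding cover_potential_def using pos by (intro ln_prod[symmetric]) force+
  finally show ?thesis unfolding sum_y .
qed

lemma sum_inverse_tail_ge:
  assumes "0 < V" "1 \<le> m" "0 < L" "L = 2 * ln V" "real k = m * V" "real b \<le> m * L / 8" "b \<le> k"
  shows "7 * L / 16 - 1/4 \<le> (\<Sum>v\<in>{b<..k}. 1 / real v)"
proof -
  have b_le: "real b + 1 \<le> m * (L / 8 + 1)" using assms(2,6) by (simp add: algebra_simps)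
  have ln_le: "ln (L / 8 + 1) \<le> L / 16 + 1/4"
  proof -
    have "ln ((L / 8 + 1) / 2) \<le> (L / 8 + 1) / 2 - 1"
      using assms(3) by (intro ln_le_minus_one) auto
    then show ?thesis using assms(3) ln_two_le by (simp add: ln_div)
  qed
  have "7 * L / 16 - 1/4 \<le> ln V - ln (L / 8 + 1)" using assms(4) ln_le by simp
  also have "\<dots> = ln (real k / (m * (L / 8 + 1)))"
    using assms(1-3,5) by (simp add: ln_div ln_mult)
  also have "\<dots> \<le> ln ((real k + 1) / (real b + 1))"
  proof (subst ln_le_cancel_iff)
    show "real k / (m * (L / 8 + 1)) \<le> (real k + 1) / (real b + 1)"
      using b_le by (intro frac_le) auto
  qed (use assms in \<open>auto intro!: divide_pos_pos add_pos_pos\<close>)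
  also have "\<dots> \<le> (\<Sum>v\<in>{b<..k}. 1 / real v)"
    using assms(7) by (rule ln_div_le_sum_inverse)
  finally show ?thesis .
qed

lemma two_pow_div_cover_potential_le:
  fixes k \<Delta> b :: nat
  assumes "1 \<le> \<Delta>" "31/2 < L" "L = 2 * ln V" "0 < V" "real k = m * V"
    "sqrt (real k) \<le> m" "10 * real \<Delta> \<le> m" "real b \<le> m * L / 8" "m * L / 8 < real b + 1"
  shows "2 ^ (k + \<Delta>) / cover_potential k V b \<le> exp (- sqrt (real k) / 2)"
proof -
  define H where "H = (\<Sum>v\<in>{b<..k}. 1 / real v)"
  define P where "P = cover_potential k V b"
  have m: "10 \<le> m" using assms(1,7) by simp
  have "L \<le> 2 * V" using ln_le_minus_one[OF assms(4)] assms(3) by linarith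
  then have "m * (L / 8) \<le> m * V" using m assms(4) by (intro mult_left_mono) auto
  then have b_le: "b \<le> k" using assms(5,8) by linarith
  have "2 * L * real k < 16 * (real b + 1) * V"
    using mult_strict_right_mono[OF assms(9) assms(4)] assms(5) by (simp add: algebra_simps)
  moreover have "31 * real k \<le> 2 * L * real k" using assms(2) by (intro mult_right_mono) auto
  ultimately have "31 * real k \<le> 16 * (real b + 1) * V" by linarith
  from ln_cover_potential_ge[OF assms(4) b_le this]
  have ln_P: "real (k - b) * ln 2 + 31/39 * (m / 2 * H - real (k - b) / (2 * V)) \<le> ln P"
    unfolding H_def P_def using assms(4,5) by simp
  have H: "7 * L / 16 - 1/4 \<le> H"
    unfolding H_def using m assms(2) by (intro sum_inverse_tail_ge[OF assms(4) _ _ assms(3,5,8) b_le]) auto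
  have "real (k - b) / (2 * V) \<le> m / 2"
    using assms(4,5) by (simp add: field_simps)
  moreover have "real (k + \<Delta>) * ln 2 = real (k - b) * ln 2 + (real b + real \<Delta>) * ln 2"
    using b_le by (simp add: algebra_simps)
  moreover have "31/39 * (m / 2 * H - real (k - b) / (2 * V)) = 31/78 * m * H - 31/39 * (real (k - b) / (2 * V))"
    by (simp add: algebra_simps)
  ultimately have "real (k + \<Delta>) * ln 2 - ln P \<le> (real b + real \<Delta>) * ln 2 - 31/78 * m * H + 31/78 * m"
    using ln_P by linarith
  also have "\<dots> \<le> (m * L / 8 + m / 10) * (3/4) - 31/78 * m * (7 * L / 16 - 1/4) + 31/78 * m"
    using assms(7,8) H m ln_two_le by (intro add_mono diff_mono mult_mono mult_left_mono) auto
  also have "\<dots> \<le> - m / 2"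
    using m assms(2) by (simp add: algebra_simps mult_right_mono)
  also have "\<dots> \<le> - sqrt (real k) / 2" using assms(6) by simp
  finally have "real (k + \<Delta>) * ln 2 - ln P \<le> - sqrt (real k) / 2" .
  moreover have "0 < P" unfolding P_def using cover_potential_ge_one[OF assms(4), of k b] by linarith
  then have "2 ^ (k + \<Delta>) / P = exp (real (k + \<Delta>) * ln 2 - ln P)"
    unfolding exp_diff exp_of_nat_mult by simp
  ultimately show ?thesis unfolding P_def by simp
qed

lemma hundred_le_of_ln_gt:
  fixes r :: real
  assumes "0 < r" "31/2 < ln r"
  shows "100 \<le> r"
proof -
  have "100 \<le> exp (31/2::real)"
    using exp_lower_Taylor_quadratic[of "31/2::real"] by (simp add: power2_eq_square)
  also have "\<dots> < r" using assms by (metis exp_less_cancel_iff exp_ln)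
  finally show ?thesis by simp
qed

lemma sqrt_ratio_facts:
  assumes "1 \<le> \<Delta>" "100 * \<Delta> \<le> k"
  defines "V \<equiv> sqrt (real k / real \<Delta>)" and "m \<equiv> sqrt (real k * real \<Delta>)"
  shows "ln (real k / real \<Delta>) = 2 * ln V" "10 \<le> V" "real k = m * V"
    "sqrt (real k) \<le> m" "10 * real \<Delta> \<le> m"
proof -
  have r: "100 \<le> real k / real \<Delta>" using assms(1,2) by (simp add: field_simps)
  then show "ln (real k / real \<Delta>) = 2 * ln V" unfolding V_def by (simp add: ln_sqrt)
  show "10 \<le> V" unfolding V_def using real_sqrt_le_mono[OF r] by simp
  show "real k = m * V" unfolding V_def m_def using assms(1)
    by (simp add: real_sqrt_mult[symmetric])
  show "sqrt (real k) \<le> m" unfolding m_def using assms(1) by (simp add: mult_le_cancel_left1)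
  have "100 * real \<Delta> \<le> real k" using assms(2) by linarith
  from mult_right_mono[OF this, of "real \<Delta>"]
  have "(10 * real \<Delta>)\<^sup>2 \<le> real k * real \<Delta>" by (simp add: power2_eq_square)
  then show "10 * real \<Delta> \<le> m" unfolding m_def by (rule real_le_rsqrt)
qed

section \<open>The clustered instance\<close>

text \<open>Point i of cluster j is a e_j + e_(k + j n + i); the center a e_j is at squared distance 1
  from every point of cluster j.\<close>

locale clustered_instance =
  fixes k n :: nat and a :: real
  assumes k_pos: "1 \<le> k" and n_pos: "1 \<le> n"
begin

definition dim :: nat where
  "dim = k + k * n"

definition point :: "nat \<Rightarrow> nat \<Rightarrow> nat \<Rightarrow> real" where
  "point j i = (\<lambda>l. if l = j then a else if l = k + j * n + i then 1 else 0)"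

definition cluster :: "nat \<Rightarrow> (nat \<Rightarrow> real) set" where
  "cluster j = point j ` {..<n}"

definition points :: "(nat \<Rightarrow> real) set" where
  "points = (\<Union>j<k. cluster j)"

definition far_cost :: real where
  "far_cost = 2 + 2 * a\<^sup>2"

definition uncovered :: "(nat \<Rightarrow> real) set \<Rightarrow> nat set" where
  "uncovered C = {j. j < k \<and> cluster j \<inter> C = {}}"

definition uncovered_points :: "(nat \<Rightarrow> real) set \<Rightarrow> (nat \<Rightarrow> real) set" where
  "uncovered_points C = (\<Union>j\<in>uncovered C. cluster j)"

lemma coord_lt_dim: "j < k \<Longrightarrow> i < n \<Longrightarrow> k + j * n + i < dim"
proof -
  assume "j < k" "i < n"
  then have "j * n + i < Suc j * n" by simp
  also have "\<dots> \<le> k * n" using \<open>j < k\<close> by (intro mult_right_mono) auto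
  finally show ?thesis unfolding dim_def by simp
qed

lemma coord_eq_iff:
  assumes "i < n" "i' < n"
  shows "k + j * n + i = k + j' * n + i' \<longleftrightarrow> j = j' \<and> i = i'"
proof
  assume "k + j * n + i = k + j' * n + i'"
  then have "(j * n + i) div n = (j' * n + i') div n" "(j * n + i) mod n = (j' * n + i') mod n"
    by simp_all
  then show "j = j' \<and> i = i'" using assms by simp
qed simp

lemma sqdist_point:
  assumes "j < k" "i < n" "j' < k" "i' < n"
  shows "sqdist dim (point j i) (point j' i')
    = (if j = j' then 0 else 2 * a\<^sup>2) + (if j = j' \<and> i = i' then 0 else 2)"
proof -
  let ?e = "k + j * n + i" and ?e' = "k + j' * n + i'"
  have e: "?e < dim" "?e' < dim" using coord_lt_dim assms by auto
  have "sqdist dim (point j i) (point j' i') = (\<Sum>l\<in>{j, j', ?e, ?e'}. (point j i l - point j' i' l)\<^sup>2)"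
    unfolding sqdist_def using assms e
    by (intro sum.mono_neutral_right) (auto simp: point_def dim_def)
  also have "\<dots> = (if j = j' then 0 else 2 * a\<^sup>2) + (if j = j' \<and> i = i' then 0 else 2)"
    using assms coord_eq_iff[OF assms(2,4), of j j']
    by (cases "j = j'"; cases "?e = ?e'") (auto simp: point_def power2_eq_square)
  finally show ?thesis .
qed

lemma point_eq_iff:
  assumes "j < k" "i < n" "j' < k" "i' < n"
  shows "point j i = point j' i' \<longleftrightarrow> j = j' \<and> i = i'"
proof -
  have "2 * a\<^sup>2 + 2 \<noteq> 0" by (smt (verit) zero_le_power2)
  then show ?thesis using sqdist_point[OF assms] by (auto simp: sqdist_def split: if_splits)
qed

lemma finite_cluster: "finite (cluster j)"
  by (simp add: cluster_def)

lemma card_cluster: "j < k \<Longrightarrow> card (cluster j) = n"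
  unfolding cluster_def by (subst card_image) (auto simp: inj_on_def point_eq_iff)

lemma cluster_disjoint: "j < k \<Longrightarrow> j' < k \<Longrightarrow> j \<noteq> j' \<Longrightarrow> cluster j \<inter> cluster j' = {}"
  by (auto simp: cluster_def point_eq_iff)

lemma sqdist_cluster:
  assumes "j < k" "j' < k" "x \<in> cluster j" "y \<in> cluster j'"
  shows "sqdist dim x y = (if j = j' then 0 else 2 * a\<^sup>2) + (if x = y then 0 else 2)"
  using assms by (auto simp: cluster_def sqdist_point point_eq_iff)

lemma finite_points: "finite points"
  by (simp add: points_def finite_cluster)

lemma card_points: "card points = k * n"
  unfolding points_def by (subst card_UN_disjoint) (auto simp: finite_cluster card_cluster cluster_disjoint)

lemma points_nonempty: "points \<noteq> {}"
  using card_points k_pos n_pos by auto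

lemma points_subset_Rd: "points \<subseteq> Rd dim"
proof
  fix x assume "x \<in> points"
  then obtain j i where "j < k" "i < n" "x = point j i" by (auto simp: points_def cluster_def)
  moreover have "j < dim" using \<open>j < k\<close> by (simp add: dim_def)
  ultimately show "x \<in> Rd dim" using coord_lt_dim[OF \<open>j < k\<close> \<open>i < n\<close>] by (auto simp: Rd_def point_def)
qed

lemma far_cost_ge_two: "2 \<le> far_cost"
  by (simp add: far_cost_def)

lemma cost_uncovered_point:
  assumes "x \<in> uncovered_points C" "C \<subseteq> points" "C \<noteq> {}"
  shows "cost dim x C = far_cost"
proof -
  obtain j where j: "j < k" "x \<in> cluster j" "cluster j \<inter> C = {}"
    using assms(1) by (auto simp: uncovered_points_def uncovered_def)
  have "sqdist dim x c = far_cost" if "c \<in> C" for c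
  proof -
    obtain j' where "j' < k" "c \<in> cluster j'" using assms(2) \<open>c \<in> C\<close> by (auto simp: points_def)
    moreover have "j' \<noteq> j" "x \<noteq> c" using j \<open>c \<in> C\<close> calculation by auto
    ultimately show ?thesis using sqdist_cluster[OF j(1) _ j(2)] by (simp add: far_cost_def)
  qed
  moreover obtain c where "c \<in> C" "cost dim x C = sqdist dim x c"
    using cost_attained assms(2,3) finite_subset[OF _ finite_points] by metis
  ultimately show ?thesis by simp
qed

lemma two_le_cost:
  assumes "x \<in> points - C" "C \<subseteq> points" "C \<noteq> {}"
  shows "2 \<le> cost dim x C"
proof (rule cost_ge)
  fix c assume "c \<in> C"
  obtain j j' where "j < k" "x \<in> cluster j" "j' < k" "c \<in> cluster j'"
    using assms(1,2) \<open>c \<in> C\<close> by (auto simp: points_def)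
  then show "2 \<le> sqdist dim x c" using sqdist_cluster assms(1) \<open>c \<in> C\<close> by auto
qed (use assms finite_subset[OF _ finite_points] in auto)

lemma uncovered_points_subset: "uncovered_points C \<subseteq> points"
  by (auto simp: uncovered_points_def uncovered_def points_def)

lemma card_uncovered_points: "card (uncovered_points C) = card (uncovered C) * n"
  unfolding uncovered_points_def
  by (subst card_UN_disjoint) (auto simp: uncovered_def finite_cluster card_cluster cluster_disjoint)

lemma card_uncovered_le: "card (uncovered C) \<le> k"
  using card_mono[of "{..<k}" "uncovered C"] by (auto simp: uncovered_def)

lemma uncovered_empty [simp]: "uncovered {} = {..<k}"
  by (auto simp: uncovered_def)

lemma card_uncovered_lt:
  assumes "C \<subseteq> points" "C \<noteq> {}"
  shows "card (uncovered C) < k"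
proof -
  obtain x where "x \<in> C" using assms(2) by blast
  then obtain j where "j < k" "x \<in> cluster j" using assms(1) by (auto simp: points_def)
  then have "uncovered C \<subseteq> {..<k} - {j}" using \<open>x \<in> C\<close> by (auto simp: uncovered_def)
  then have "card (uncovered C) \<le> card ({..<k} - {j})" by (intro card_mono) auto
  then show ?thesis using \<open>j < k\<close> by simp
qed

lemma card_uncovered_insert:
  assumes "x \<in> points"
  shows "card (uncovered (insert x C))
    = (if x \<in> uncovered_points C then card (uncovered C) - 1 else card (uncovered C))"
proof -
  obtain j where j: "j < k" "x \<in> cluster j" using assms by (auto simp: points_def)
  then have unique: "x \<in> cluster j' \<longleftrightarrow> j' = j" if "j' < k" for j'
    using cluster_disjoint that by blast
  have "uncovered (insert x C) = uncovered C - {j}"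
    using j unique by (auto simp: uncovered_def)
  moreover have "x \<in> uncovered_points C \<longleftrightarrow> j \<in> uncovered C"
    using unique by (auto simp: uncovered_points_def uncovered_def)
  moreover have "finite (uncovered C)" by (simp add: uncovered_def)
  ultimately show ?thesis by auto
qed

lemma card_covered_noncenters_ge:
  assumes "C \<subseteq> points"
  shows "real (k * n) - real (card (uncovered C) * n) - real (card C)
    \<le> real (card (points - uncovered_points C - C))"
proof -
  have "card (points - uncovered_points C) = k * n - card (uncovered C) * n"
    using card_Diff_subset[OF finite_subset[OF _ finite_points] uncovered_points_subset]
    by (simp add: card_points card_uncovered_points uncovered_points_subset)
  moreover have "card (uncovered C) * n \<le> k * n" using card_uncovered_le by simp
  moreover have "card (points - uncovered_points C) - card C \<le> card (points - uncovered_points C - C)"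
    using finite_subset[OF assms finite_points] by (rule diff_card_le_card_Diff)
  ultimately show ?thesis by linarith
qed

lemma cost_set_ge:
  assumes "C \<subseteq> points" "C \<noteq> {}"
  shows "far_cost * real (card (uncovered C) * n) + 2 * real (card (points - uncovered_points C - C))
    \<le> cost_set dim points C"
proof -
  have fin: "finite C" using assms(1) finite_subset[OF _ finite_points] by blast
  have "far_cost * real (card (uncovered C) * n) = (\<Sum>x\<in>uncovered_points C. cost dim x C)"
    using cost_uncovered_point[OF _ assms] by (simp add: card_uncovered_points)
  moreover have "2 * real (card (points - uncovered_points C - C))
      = (\<Sum>x\<in>points - uncovered_points C - C. 2)" by simp
  moreover have "\<dots> \<le> (\<Sum>x\<in>points - uncovered_points C - C. cost dim x C)"
    by (intro sum_mono two_le_cost[OF _ assms]) blast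
  moreover have "\<dots> \<le> (\<Sum>x\<in>points - uncovered_points C. cost dim x C)"
    using finite_points by (intro sum_mono2 cost_nonneg[OF fin assms(2)]) auto
  moreover have "cost_set dim points C
      = (\<Sum>x\<in>uncovered_points C. cost dim x C) + (\<Sum>x\<in>points - uncovered_points C. cost dim x C)"
    unfolding cost_set_def using finite_points uncovered_points_subset
    by (metis sum.subset_diff add.commute)
  ultimately show ?thesis by linarith
qed

lemma prob_uncovered_points_step:
  assumes "C \<subseteq> points" "card C \<le> 2 * k" "4 * k \<le> n"
  defines "u \<equiv> real (card (uncovered C))"
  shows "measure_pmf.prob (kpp_step dim points C) (uncovered_points C) * (u * far_cost + (real k - u))
    \<le> u * far_cost"
proof (cases "C = {}")
  case True
  then show ?thesis
    using measure_pmf.prob_le_1 far_cost_ge_two unfolding u_def by (simp add: mult_left_le_one_le)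
next
  case False
  define S where "S = cost_set dim points C"
  have "card (uncovered C) < k" using card_uncovered_lt[OF assms(1) False] .
  then have "1 \<le> real k - u" unfolding u_def by linarith
  then have "real n \<le> real n * (real k - u)" by (simp add: mult_le_cancel_left1)
  moreover have "2 * real (card C) \<le> real n" using assms(2,3) by linarith
  moreover have "far_cost * (u * real n) + 2 * (real (k * n) - u * real n - real (card C)) \<le> S"
    using cost_set_ge[OF assms(1) False] card_covered_noncenters_ge[OF assms(1)] unfolding S_def u_def by simp
  ultimately have S_ge: "real n * (u * far_cost + (real k - u)) \<le> S"
    by (simp add: algebra_simps)
  have "0 < real n * (u * far_cost + (real k - u))"
    using n_pos far_cost_ge_two \<open>1 \<le> real k - u\<close> unfolding u_def by (intro mult_pos_pos add_nonneg_pos) auto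
  with S_ge have S_pos: "0 < S" by linarith
  have "measure_pmf.prob (kpp_step dim points C) (uncovered_points C) = u * real n * far_cost / S"
    using prob_kpp_step[OF finite_points finite_subset[OF assms(1) finite_points] False _
        uncovered_points_subset] S_pos cost_uncovered_point[OF _ assms(1) False]
    unfolding S_def u_def by (simp add: card_uncovered_points)
  also have "\<dots> * (u * far_cost + (real k - u)) = u * far_cost * (real n * (u * far_cost + (real k - u))) / S"
    by simp
  also have "\<dots> \<le> u * far_cost * S / S"
    using S_ge far_cost_ge_two S_pos unfolding u_def by (intro divide_right_mono mult_left_mono) auto
  finally show ?thesis using S_pos by simp
qed

lemma nn_integral_cover_potential_step:
  assumes "C \<subseteq> points" "card C \<le> 2 * k" "4 * k \<le> n"
  defines "\<Phi> \<equiv> cover_potential k far_cost" and "u \<equiv> card (uncovered C)"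
  shows "(\<integral>\<^sup>+x. ennreal (\<Phi> (card (uncovered (insert x C)))) \<partial>kpp_step dim points C) \<le> 2 * ennreal (\<Phi> u)"
proof -
  define P where "P = measure_pmf.prob (kpp_step dim points C) (uncovered_points C)"
  have V: "0 < far_cost" using far_cost_ge_two by simp
  have \<Phi>: "1 \<le> \<Phi> u" "\<Phi> u \<le> \<Phi> (u - 1)"
    unfolding \<Phi>_def using cover_potential_ge_one[OF V] cover_potential_antimono[OF V] by auto
  have "AE x in kpp_step dim points C. ennreal (\<Phi> (card (uncovered (insert x C))))
      = ennreal (if x \<in> uncovered_points C then \<Phi> (u - 1) else \<Phi> u)"
  proof (subst AE_measure_pmf_iff, intro ballI)
    fix x assume "x \<in> set_pmf (kpp_step dim points C)"
    then have "x \<in> points"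
      using set_pmf_kpp_step[OF finite_points points_nonempty finite_subset[OF assms(1) finite_points]]
      by blast
    then show "ennreal (\<Phi> (card (uncovered (insert x C))))
        = ennreal (if x \<in> uncovered_points C then \<Phi> (u - 1) else \<Phi> u)"
      by (simp add: card_uncovered_insert u_def)
  qed
  then have "(\<integral>\<^sup>+x. ennreal (\<Phi> (card (uncovered (insert x C)))) \<partial>kpp_step dim points C)
      = (\<integral>\<^sup>+x. ennreal (if x \<in> uncovered_points C then \<Phi> (u - 1) else \<Phi> u) \<partial>kpp_step dim points C)"
    by (rule nn_integral_cong_AE)
  also have "\<dots> = ennreal (\<Phi> u + (\<Phi> (u - 1) - \<Phi> u) * P)"
    unfolding P_def using \<Phi> by (intro nn_integral_pmf_if) auto
  also have "\<dots> \<le> ennreal (2 * \<Phi> u)"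
  proof (rule ennreal_leI, cases "u = 0")
    case False
    have "u \<le> k" unfolding u_def by (rule card_uncovered_le)
    define \<rho> where "\<rho> = 2 + (real k - real u) / (real u * far_cost)"
    have "(\<rho> - 1) * P = P * (real u * far_cost + (real k - real u)) / (real u * far_cost)"
      unfolding \<rho>_def using False V by (simp add: field_simps)
    also have "\<dots> \<le> 1"
      using prob_uncovered_points_step[OF assms(1-3)] False V unfolding P_def u_def by simp
    finally have "(\<rho> - 1) * P \<le> 1" .
    moreover have "\<Phi> (u - 1) = \<rho> * \<Phi> u"
      unfolding \<Phi>_def \<rho>_def using False \<open>u \<le> k\<close> by (intro cover_potential_pred) auto
    then have "(\<Phi> (u - 1) - \<Phi> u) * P = \<Phi> u * ((\<rho> - 1) * P)"
      by (simp add: algebra_simps)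
    moreover have "\<Phi> u * ((\<rho> - 1) * P) \<le> \<Phi> u"
      using \<Phi>(1) mult_left_mono[OF \<open>(\<rho> - 1) * P \<le> 1\<close>, of "\<Phi> u"] by simp
    ultimately show "\<Phi> u + (\<Phi> (u - 1) - \<Phi> u) * P \<le> 2 * \<Phi> u" by linarith
  next
    case True
    then show "\<Phi> u + (\<Phi> (u - 1) - \<Phi> u) * P \<le> 2 * \<Phi> u" using \<Phi> by simp
  qed
  also have "\<dots> = 2 * ennreal (\<Phi> u)"
    using \<Phi> by (subst ennreal_mult) auto
  finally show ?thesis .
qed

lemma prob_card_uncovered_le:
  assumes "4 * k \<le> n" "N \<le> 2 * k"
  shows "measure_pmf.prob (kpp dim points N) {C. card (uncovered C) \<le> b}
    \<le> 2 ^ N / cover_potential k far_cost b"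
proof (rule pmf_Markov_inequality[where f = "\<lambda>C. cover_potential k far_cost (card (uncovered C))"])
  have V: "0 < far_cost" using far_cost_ge_two by simp
  then show "0 < cover_potential k far_cost b" using cover_potential_ge_one[OF V, of k b] by linarith
  show "cover_potential k far_cost b \<le> cover_potential k far_cost (card (uncovered C))"
    if "C \<in> {C. card (uncovered C) \<le> b}" for C using that cover_potential_antimono[OF V] by auto
  have "(\<integral>\<^sup>+C. ennreal (cover_potential k far_cost (card (uncovered C))) \<partial>kpp dim points N)
      \<le> 2 ^ N * ennreal (cover_potential k far_cost (card (uncovered {})))"
  proof (rule nn_integral_kpp_le_pow)
    fix t C assume "t < N" "C \<in> set_pmf (kpp dim points t)"
    then have "C \<subseteq> points \<and> card C \<le> t"
      using set_pmf_kpp[OF finite_points points_nonempty] by blast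
    then have "C \<subseteq> points" "card C \<le> 2 * k" using \<open>t < N\<close> assms(2) by auto
    then show "(\<integral>\<^sup>+x. ennreal (cover_potential k far_cost (card (uncovered (insert x C))))
        \<partial>kpp_step dim points C) \<le> 2 * ennreal (cover_potential k far_cost (card (uncovered C)))"
      using assms(1) by (rule nn_integral_cover_potential_step)
  qed
  then show "(\<integral>\<^sup>+C. ennreal (cover_potential k far_cost (card (uncovered C))) \<partial>kpp dim points N)
      \<le> ennreal (2 ^ N)"
    by (simp add: ennreal_power[symmetric])
qed simp

lemma OPT_le_card_points:
  assumes "a \<noteq> 0"
  shows "OPT dim k points \<le> real (k * n)"
proof -
  define axis where "axis j = (\<lambda>l. if l = j then a else 0)" for j :: nat
  have "inj_on axis {..<k}"
    using assms by (auto simp: inj_on_def axis_def fun_eq_iff)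
  then have "OPT dim k points \<le> cost_set dim points (axis ` {..<k})"
    using k_pos card_image[of axis "{..<k}"] by (intro OPT_le_cost_set) (auto simp: Rd_def axis_def dim_def)
  also have "\<dots> \<le> (\<Sum>x\<in>points. 1)"
    unfolding cost_set_def
  proof (rule sum_mono)
    fix x assume "x \<in> points"
    then obtain j i where ji: "j < k" "i < n" "x = point j i" by (auto simp: points_def cluster_def)
    have "sqdist dim x (axis j) = (\<Sum>l\<in>{k + j * n + i}. (x l - axis j l)\<^sup>2)"
      unfolding sqdist_def using coord_lt_dim[OF ji(1,2)] ji
      by (intro sum.mono_neutral_right) (auto simp: point_def axis_def)
    then have "sqdist dim x (axis j) = 1" using ji by (simp add: point_def axis_def)
    moreover have "cost dim x (axis ` {..<k}) \<le> sqdist dim x (axis j)"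
      using ji by (intro cost_le_sqdist) auto
    ultimately show "cost dim x (axis ` {..<k}) \<le> 1" by simp
  qed
  finally show ?thesis by (simp add: card_points)
qed

lemma prob_cost_set_gt_eq_one:
  assumes "1 \<le> N" "\<theta> < 2 * (real (k * n) - real N)"
  shows "measure_pmf.prob (kpp dim points N) {C. \<theta> < cost_set dim points C} = 1"
proof (rule measure_pmf.prob_eq_1[THEN iffD2])
  show "AE C in kpp dim points N. C \<in> {C. \<theta> < cost_set dim points C}"
  proof (subst AE_measure_pmf_iff, intro ballI)
    fix C assume "C \<in> set_pmf (kpp dim points N)"
    then have C: "C \<subseteq> points" "card C \<le> N" "C \<noteq> {}"
      using set_pmf_kpp[OF finite_points points_nonempty] assms(1) by auto
    have "2 * (real (k * n) - real N) \<le> 2 * (real (k * n) - real (card C))" using C(2) by simp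
    also have "\<dots> \<le> far_cost * real (card (uncovered C) * n) + 2 * real (card (points - uncovered_points C - C))"
      using card_covered_noncenters_ge[OF C(1)] mult_right_mono[OF far_cost_ge_two, of "real (card (uncovered C) * n)"]
      by simp
    also have "\<dots> \<le> cost_set dim points C" using cost_set_ge[OF C(1,3)] .
    finally show "C \<in> {C. \<theta> < cost_set dim points C}" using assms(2) by simp
  qed
qed simp

lemma prob_cost_set_gt_lower_bound:
  assumes "4 * k \<le> n" "1 \<le> N" "N \<le> 2 * k" "\<theta> < far_cost * (real b + 1) * real n"
  shows "1 - 2 ^ N / cover_potential k far_cost b
    \<le> measure_pmf.prob (kpp dim points N) {C. \<theta> < cost_set dim points C}"
proof -
  let ?M = "kpp dim points N"
  have "AE C in ?M. C \<in> - {C. card (uncovered C) \<le> b} \<longrightarrow> C \<in> {C. \<theta> < cost_set dim points C}"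
  proof (subst AE_measure_pmf_iff, intro ballI impI)
    fix C assume "C \<in> set_pmf ?M" "C \<in> - {C. card (uncovered C) \<le> b}"
    then have C: "C \<subseteq> points" "C \<noteq> {}" "real b + 1 \<le> real (card (uncovered C))"
      using set_pmf_kpp[OF finite_points points_nonempty] assms(2) by auto
    have "\<theta> < far_cost * (real b + 1) * real n" by (rule assms(4))
    also have "\<dots> \<le> far_cost * real (card (uncovered C) * n)"
      using C(3) far_cost_ge_two by (simp add: mult_right_mono mult_left_mono)
    also have "\<dots> \<le> cost_set dim points C" using cost_set_ge[OF C(1,2)] by simp
    finally show "C \<in> {C. \<theta> < cost_set dim points C}" by simp
  qed
  then have "measure_pmf.prob ?M (- {C. card (uncovered C) \<le> b})
      \<le> measure_pmf.prob ?M {C. \<theta> < cost_set dim points C}"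
    by (intro measure_pmf.finite_measure_mono_AE) auto
  moreover have "measure_pmf.prob ?M (- {C. card (uncovered C) \<le> b})
      = 1 - measure_pmf.prob ?M {C. card (uncovered C) \<le> b}"
    using measure_pmf.prob_compl[of "{C. card (uncovered C) \<le> b}" ?M] by (simp add: Compl_eq_Diff_UNIV)
  ultimately show ?thesis using prob_card_uncovered_le[OF assms(1,3), of b] by linarith
qed

lemma prob_cost_set_gt_OPT_small_ratio:
  assumes "a \<noteq> 0" "n = 128 * k" "\<Delta> \<le> k" "0 \<le> L" "L \<le> 31/2"
  shows "measure_pmf.prob (kpp dim points (k + \<Delta>)) {C. 1/8 * L * OPT dim k points < cost_set dim points C} = 1"
proof (rule prob_cost_set_gt_eq_one)
  have "1/8 * L * OPT dim k points \<le> 1/8 * L * real (k * n)"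
    using OPT_le_card_points[OF assms(1)] assms(4) by (intro mult_left_mono) auto
  also have "\<dots> \<le> 31/16 * real (k * n)"
    using assms(5) by (intro mult_right_mono) auto
  also have "\<dots> < 2 * (real (k * n) - real (k + \<Delta>))"
  proof -
    define X Y where "X = real (k * n)" and "Y = real (k + \<Delta>)"
    have "X = 128 * (real k * real k)" "Y \<le> 2 * real k"
      unfolding X_def Y_def using assms(2,3) by auto
    moreover have "real k \<le> real k * real k" using k_pos by (simp add: mult_le_cancel_left1)
    moreover have "1 \<le> real k" using k_pos by simp
    ultimately show ?thesis unfolding X_def[symmetric] Y_def[symmetric] by argo
  qed
  finally show "1/8 * L * OPT dim k points < 2 * (real (k * n) - real (k + \<Delta>))" .
qed (use k_pos in simp)

lemma prob_cost_set_gt_OPT_large_ratio: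
  assumes "n = 128 * k" "1 \<le> \<Delta>" "\<Delta> \<le> k" "31/2 < ln (real k / real \<Delta>)"
    and a: "a = sqrt (sqrt (real k / real \<Delta>) / 2 - 1)"
  shows "1 - exp (- sqrt (real k) / 2) \<le> measure_pmf.prob (kpp dim points (k + \<Delta>))
    {C. 1/8 * ln (real k / real \<Delta>) * OPT dim k points < cost_set dim points C}"
proof -
  define L where "L = ln (real k / real \<Delta>)"
  define V where "V = sqrt (real k / real \<Delta>)"
  define m where "m = sqrt (real k * real \<Delta>)"
  define b where "b = nat \<lfloor>m * L / 8\<rfloor>"
  have "100 * \<Delta> \<le> k"
    using hundred_le_of_ln_gt[OF _ assms(4)] assms(2,3) by (simp add: field_simps)
  note V_m = sqrt_ratio_facts[OF assms(2) this, folded V_def m_def L_def]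
  have "a\<^sup>2 = V / 2 - 1" using V_m(2) unfolding a V_def by simp
  then have far_cost: "far_cost = V" by (simp add: far_cost_def)
  have "a \<noteq> 0" using \<open>a\<^sup>2 = V / 2 - 1\<close> V_m(2) by auto
  have "0 < L" using assms(4) unfolding L_def by simp
  have "0 \<le> m * L / 8" using \<open>0 < L\<close> V_m(5) by simp
  then have b: "real b \<le> m * L / 8" "m * L / 8 < real b + 1"
    unfolding b_def by linarith+
  have "1/8 * L * OPT dim k points \<le> 1/8 * L * real (k * n)"
    using OPT_le_card_points[OF \<open>a \<noteq> 0\<close>] \<open>0 < L\<close> by (intro mult_left_mono) auto
  also have "\<dots> = m * L / 8 * V * real n" using V_m(3) by simp
  also have "\<dots> < far_cost * (real b + 1) * real n"
    using b(2) V_m(2) n_pos unfolding far_cost by (simp add: mult_strict_right_mono)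
  finally have "1 - 2 ^ (k + \<Delta>) / cover_potential k V b \<le> measure_pmf.prob (kpp dim points (k + \<Delta>))
      {C. 1/8 * L * OPT dim k points < cost_set dim points C}"
    unfolding far_cost[symmetric] using assms(1,3) k_pos by (intro prob_cost_set_gt_lower_bound) auto
  moreover have "2 ^ (k + \<Delta>) / cover_potential k V b \<le> exp (- sqrt (real k) / 2)"
    using V_m b assms(2,4) unfolding L_def by (intro two_pow_div_cover_potential_le) auto
  ultimately show ?thesis unfolding L_def by linarith
qed

end

theorem mainTheorem17:
  fixes k \<Delta> :: nat
  assumes "k > 1" and "1 \<le> \<Delta>" and "\<Delta> \<le> k"
  shows "\<exists>(d::nat) X. finite X \<and> X \<noteq> {} \<and> X \<subseteq> Rd d \<and>
    measure_pmf.prob (kpp d X (k + \<Delta>))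
      {C. cost_set d X C > 1/8 * ln (real k / real \<Delta>) * OPT d k X}
    \<ge> 1 - exp (- sqrt (real k) / 2)"
proof -
  define L where "L = ln (real k / real \<Delta>)"
  define a where "a = (if L \<le> 31/2 then 1 else sqrt (sqrt (real k / real \<Delta>) / 2 - 1))"
  interpret clustered_instance k "128 * k" a
    using assms by unfold_locales auto
  have "1 - exp (- sqrt (real k) / 2) \<le> measure_pmf.prob (kpp dim points (k + \<Delta>))
      {C. 1/8 * L * OPT dim k points < cost_set dim points C}"
  proof (cases "L \<le> 31/2")
    case True
    moreover have "0 \<le> L" using assms unfolding L_def by simp
    ultimately show ?thesis
      using prob_cost_set_gt_OPT_small_ratio[of \<Delta> L] assms unfolding a_def by simp
  next
    case False
    then show ?thesis
      using prob_cost_set_gt_OPT_large_ratio[of \<Delta>] assms unfolding a_def L_def by simp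
  qed
  then show ?thesis
    using finite_points points_nonempty points_subset_Rd unfolding L_def by blast
qed

end
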